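(* Let $(M,\Sigma)$ be a measurable space, $r\ge1$, and $\mu_1,\dots,\mu_r$ non-atomic countably additive finite measures on $\Sigma$. Let $S\in\Sigma$ with $\prod_{i=1}^r\mu_i(S)\neq0$. Then there exist pairwise disjoint measurable sets $R^1,\dots,R^r\subseteq S$ and a permutation $(l_1,\dots,l_r)$ of $\{1,\dots,r\}$ with $\mu_{l_k}(R^k)=\frac1r\mu_{l_k}(S)$ for each $k$ and $\mu_{l_j}(R^k)\le\frac1r\mu_{l_j}(S)$ for all $j>k$, together with a measurable subset $H\subseteq S$ such that $\mu_{l_1}(H)\ge 2^{-(r-1)}\mu_{l_1}(S)$ and $H$ has a gentleman's solution, i.e. a partition $H=F_1\sqcup\dots\sqcup F_r$ into measurable sets with $\mu_i(F_i)\le\mu_i(F_j)$ for all $i,j$.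
   Context: Partition elements may be empty. *)

theory Defs
  imports "HOL-Analysis.Analysis"
begin

definition nonatomic :: "'a measure \<Rightarrow> bool" where
  "nonatomic N \<longleftrightarrow> (\<forall>A\<in>sets N. emeasure N A > 0 \<longrightarrow>
      (\<exists>B\<in>sets N. B \<subseteq> A \<and> 0 < emeasure N B \<and> emeasure N B < emeasure N A))"

definition gentleman_solution ::
  "'a measure \<Rightarrow> (nat \<Rightarrow> 'a measure) \<Rightarrow> nat \<Rightarrow> 'a set \<Rightarrow> (nat \<Rightarrow> 'a set) \<Rightarrow> bool" where
  "gentleman_solution M mu r H F \<longleftrightarrow>
     (\<forall>i\<in>{1..r}. F i \<in> sets M) \<and>
     (\<forall>i\<in>{1..r}. \<forall>j\<in>{1..r}. i \<noteq> j \<longrightarrow> F i \<inter> F j = {}) \<and>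
     (\<Union>i\<in>{1..r}. F i) = H \<and>
     (\<forall>i\<in>{1..r}. \<forall>j\<in>{1..r}. measure (mu i) (F i) \<le> measure (mu i) (F j))"

end

theory Submission
  imports Defs
begin

text \<open>The pieces can be chosen to split every \<open>\<mu>\<^sub>i\<close> exactly into \<open>r\<close> equal parts, so one may take
  \<open>l = id\<close>, \<open>R = F\<close> = the pieces and \<open>H\<close> their union. Such an equipartition is cut out of a chain \<open>D s\<close>, \<open>0 \<le> s \<le> 1\<close>, of
  subsets of \<open>S\<close> with \<open>\<mu>\<^sub>i (D s) = s \<mu>\<^sub>i S\<close> for all \<open>i\<close> simultaneously. The chain is built dyadically
  from any operation halving all measures at once, and a common halving exists by induction on the
  number of measures: for a chain \<open>D\<close> adapted to the sums \<open>\<mu>\<^sub>i + \<mu>\<^sub>j\<close>, the value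
  \<open>\<mu>\<^sub>j (D (s + 1/2) - D s)\<close> depends continuously on \<open>s\<close> and its values at \<open>0\<close> and \<open>1/2\<close> add up to
  \<open>\<mu>\<^sub>j S\<close>, so some slice halves \<open>\<mu>\<^sub>j\<close>, hence every \<open>\<mu>\<^sub>i\<close>. For a single measure this is
  Sierpinski's theorem that a non-atomic measure attains every intermediate value.\<close>

text \<open>Finite measures are handled as real-valued set functions, since sums of them are needed.\<close>

locale nonatomic_set_function =
  fixes M :: "'a measure" and f :: "'a set \<Rightarrow> real"
  assumes nonneg: "A \<in> sets M \<Longrightarrow> 0 \<le> f A"
    and additive: "A \<in> sets M \<Longrightarrow> B \<in> sets M \<Longrightarrow> A \<inter> B = {} \<Longrightarrow> f (A \<union> B) = f A + f B"
    and continuous_from_below: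
      "(\<And>n. X n \<in> sets M) \<Longrightarrow> incseq X \<Longrightarrow> (\<lambda>n. f (X n)) \<longlonglongrightarrow> f (\<Union>n. X n)"
    and exists_smaller_subset:
      "A \<in> sets M \<Longrightarrow> 0 < f A \<Longrightarrow> \<exists>B\<in>sets M. B \<subseteq> A \<and> 0 < f B \<and> f B < f A"
begin

lemma empty [simp]: "f {} = 0"
  using additive[of "{}" "{}"] by simp

lemma Diff: "A \<in> sets M \<Longrightarrow> B \<in> sets M \<Longrightarrow> B \<subseteq> A \<Longrightarrow> f (A - B) = f A - f B"
  using additive[of B "A - B"] by (simp add: Un_absorb1)

lemma mono: "A \<in> sets M \<Longrightarrow> B \<in> sets M \<Longrightarrow> B \<subseteq> A \<Longrightarrow> f B \<le> f A"
  using Diff[of A B] nonneg[of "A - B"] by auto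

lemma exists_subset_le_divide_power:
  assumes A: "A \<in> sets M" and pos: "0 < f A"
  shows "\<exists>B\<in>sets M. B \<subseteq> A \<and> 0 < f B \<and> f B \<le> f A / 2 ^ n"
proof (induction n)
  case 0
  then show ?case using A pos by auto
next
  case (Suc n)
  then obtain B where B: "B \<in> sets M" "B \<subseteq> A" "0 < f B" "f B \<le> f A / 2 ^ n"
    by blast
  obtain C where C: "C \<in> sets M" "C \<subseteq> B" "0 < f C" "f C < f B"
    using exists_smaller_subset[OF B(1,3)] by blast
  have BC: "f (B - C) = f B - f C"
    using Diff[OF B(1) C(1,2)] .
  have half: "f B / 2 \<le> f A / 2 ^ Suc n"
    using B(4) by simp
  show ?case
  proof (cases "f C \<le> f B / 2")
    case True
    then show ?thesis
      using B C half by (intro bexI[of _ C]) auto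
  next
    case False
    then show ?thesis
      using B C BC half by (intro bexI[of _ "B - C"]) auto
  qed
qed

lemma exists_small_subset:
  assumes A: "A \<in> sets M" and pos: "0 < f A" and e: "0 < e"
  shows "\<exists>B\<in>sets M. B \<subseteq> A \<and> 0 < f B \<and> f B \<le> e"
proof -
  obtain n where "f A / e < 2 ^ n"
    using real_arch_pow[of 2 "f A / e"] by auto
  then have "f A / 2 ^ n \<le> e"
    using e by (simp add: field_simps)
  moreover obtain B where "B \<in> sets M" "B \<subseteq> A" "0 < f B" "f B \<le> f A / 2 ^ n"
    using exists_subset_le_divide_power[OF A pos] by blast
  ultimately show ?thesis
    by (intro bexI[of _ B]) auto
qed

lemma exists_half_maximal_subset:
  assumes b: "0 \<le> b"
  shows "\<exists>D\<in>sets M. D \<subseteq> X \<and> f D \<le> b \<and>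
           (\<forall>D'\<in>sets M. D' \<subseteq> X \<longrightarrow> f D' \<le> b \<longrightarrow> f D' \<le> 2 * f D)"
proof -
  define V where "V = {f D | D. D \<in> sets M \<and> D \<subseteq> X \<and> f D \<le> b}"
  have bdd: "bdd_above V"
    unfolding V_def by (rule bdd_aboveI[of _ b]) auto
  have "0 \<in> V"
    unfolding V_def using b by (auto intro!: exI[of _ "{}"])
  show ?thesis
  proof (cases "Sup V \<le> 0")
    case True
    then have "\<forall>v\<in>V. v \<le> 0"
      using cSup_upper[OF _ bdd] by fastforce
    then show ?thesis
      using b unfolding V_def by (intro bexI[of _ "{}"]) auto
  next
    case False
    then have "Sup V / 2 < Sup V"
      by simp
    then obtain v where "v \<in> V" "Sup V / 2 < v"
      using less_cSup_iff[of V] bdd \<open>0 \<in> V\<close> by blast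
    then obtain D where "D \<in> sets M" "D \<subseteq> X" "f D \<le> b" "v = f D"
      unfolding V_def by blast
    moreover have "f D' \<le> 2 * v" if "D' \<in> sets M" "D' \<subseteq> X" "f D' \<le> b" for D'
    proof -
      have "f D' \<le> Sup V"
        using that by (intro cSup_upper[OF _ bdd]) (auto simp: V_def)
      then show ?thesis
        using \<open>Sup V / 2 < v\<close> by linarith
    qed
    ultimately show ?thesis
      by (intro bexI[of _ D]) auto
  qed
qed

lemma exists_saturated_subset:
  assumes A: "A \<in> sets M" and c: "0 \<le> c"
  shows "\<exists>L\<in>sets M. L \<subseteq> A \<and> f L \<le> c \<and>
           (\<forall>D\<in>sets M. D \<subseteq> A - L \<longrightarrow> f D \<le> c - f L \<longrightarrow> f D \<le> 0)"
proof -
  have "\<exists>D\<in>sets M. D \<subseteq> A - B \<and> f D \<le> c - f B \<and>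
          (\<forall>D'\<in>sets M. D' \<subseteq> A - B \<longrightarrow> f D' \<le> c - f B \<longrightarrow> f D' \<le> 2 * f D)"
    if "f B \<le> c" for B
    using that exists_half_maximal_subset[of "c - f B" "A - B"] by simp
  then obtain D where D: "\<And>B. f B \<le> c \<Longrightarrow>
      D B \<in> sets M \<and> D B \<subseteq> A - B \<and> f (D B) \<le> c - f B \<and>
      (\<forall>D'\<in>sets M. D' \<subseteq> A - B \<longrightarrow> f D' \<le> c - f B \<longrightarrow> f D' \<le> 2 * f (D B))"
    by metis
  define Bs where "Bs n = ((\<lambda>B. B \<union> D B) ^^ n) {}" for n
  have Bs_Suc: "Bs (Suc n) = Bs n \<union> D (Bs n)" for n
    by (simp add: Bs_def)
  have Bs: "Bs n \<in> sets M \<and> Bs n \<subseteq> A \<and> f (Bs n) \<le> c" for n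
  proof (induction n)
    case 0
    then show ?case using c by (simp add: Bs_def)
  next
    case (Suc n)
    then have "D (Bs n) \<in> sets M" "D (Bs n) \<subseteq> A - Bs n" "f (D (Bs n)) \<le> c - f (Bs n)"
      using D by auto
    moreover have "Bs n \<inter> D (Bs n) = {}"
      using calculation(2) by blast
    ultimately show ?case
      using Suc additive[of "Bs n" "D (Bs n)"] by (auto simp: Bs_Suc)
  qed
  have Bs_grow: "f (Bs (Suc n)) = f (Bs n) + f (D (Bs n))" for n
    using Bs[of n] D[of "Bs n"] additive[of "Bs n" "D (Bs n)"] by (auto simp: Bs_Suc Diff_eq)
  define L where "L = (\<Union>n. Bs n)"
  have "incseq Bs"
    by (rule incseq_SucI) (auto simp: Bs_Suc)
  then have lim: "(\<lambda>n. f (Bs n)) \<longlonglongrightarrow> f L"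
    unfolding L_def using Bs by (intro continuous_from_below) auto
  have L: "L \<in> sets M" "L \<subseteq> A" "f L \<le> c"
    using Bs LIMSEQ_le_const2[OF lim] unfolding L_def by auto
  \<comment> \<open>Each greedy step is at least half of what any admissible set could add, and the steps
    tend to \<open>0\<close> because \<open>f (Bs n)\<close> converges.\<close>
  have "f D0 \<le> 0" if D0: "D0 \<in> sets M" "D0 \<subseteq> A - L" "f D0 \<le> c - f L" for D0
  proof -
    have "f D0 \<le> 2 * f (D (Bs n))" for n
    proof -
      have "Bs n \<subseteq> L"
        unfolding L_def by blast
      moreover have "f (Bs n) \<le> f L"
        using mono[OF L(1)] Bs \<open>Bs n \<subseteq> L\<close> by blast
      ultimately have "D0 \<subseteq> A - Bs n" "f D0 \<le> c - f (Bs n)"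
        using D0 by auto
      then show ?thesis
        using D[of "Bs n"] Bs D0(1) by blast
    qed
    moreover have "(\<lambda>n. 2 * f (D (Bs n))) \<longlonglongrightarrow> 2 * (f L - f L)"
      using tendsto_diff[OF lim[THEN LIMSEQ_Suc] lim] by (intro tendsto_mult_left) (simp add: Bs_grow)
    ultimately show "f D0 \<le> 0"
      by (intro LIMSEQ_le_const[where X="\<lambda>n. 2 * f (D (Bs n))"]) auto
  qed
  then show ?thesis
    using L by blast
qed

lemma exists_subset_eq:
  assumes A: "A \<in> sets M" and c: "0 \<le> c" "c \<le> f A"
  shows "\<exists>B\<in>sets M. B \<subseteq> A \<and> f B = c"
proof -
  obtain L where L: "L \<in> sets M" "L \<subseteq> A" "f L \<le> c"
    and saturated: "\<And>D. D \<in> sets M \<Longrightarrow> D \<subseteq> A - L \<Longrightarrow> f D \<le> c - f L \<Longrightarrow> f D \<le> 0"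
    using exists_saturated_subset[OF A c(1)] by blast
  have "f L = c"
  proof (rule ccontr)
    assume "f L \<noteq> c"
    then have "0 < f (A - L)" "0 < c - f L"
      using L c Diff[OF A L(1,2)] by auto
    then obtain D where "D \<in> sets M" "D \<subseteq> A - L" "0 < f D" "f D \<le> c - f L"
      using exists_small_subset[of "A - L" "c - f L"] A L by blast
    then show False
      using saturated by force
  qed
  then show ?thesis
    using L by blast
qed

end

lemma nonatomic_set_function_add:
  assumes "nonatomic_set_function M f" "nonatomic_set_function M g"
  shows "nonatomic_set_function M (\<lambda>X. f X + g X)"
proof -
  interpret f: nonatomic_set_function M f by fact
  interpret g: nonatomic_set_function M g by fact
  show ?thesis
  proof
    fix A assume A: "A \<in> sets M" "0 < f A + g A"
    show "\<exists>B\<in>sets M. B \<subseteq> A \<and> 0 < f B + g B \<and> f B + g B < f A + g A"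
    proof (cases "0 < f A")
      case True
      then obtain B where "B \<in> sets M" "B \<subseteq> A" "0 < f B" "f B < f A"
        using f.exists_smaller_subset A(1) by blast
      then show ?thesis
        using g.mono[OF A(1)] g.nonneg by (intro bexI[of _ B]) (auto simp: add_pos_nonneg add_less_le_mono)
    next
      case False
      then obtain B where "B \<in> sets M" "B \<subseteq> A" "0 < g B" "g B < g A"
        using g.exists_smaller_subset A by force
      then show ?thesis
        using f.mono[OF A(1)] f.nonneg by (intro bexI[of _ B]) (auto simp: add_nonneg_pos add_le_less_mono)
    qed
  qed (auto simp: f.nonneg g.nonneg f.additive g.additive
        intro!: tendsto_add f.continuous_from_below g.continuous_from_below)
qed

lemma nonatomic_set_function_measure:
  assumes sets: "sets N = sets M" and "finite_measure N" and na: "nonatomic N"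
  shows "nonatomic_set_function M (measure N)"
proof -
  interpret finite_measure N by fact
  show ?thesis
  proof
    fix A assume "A \<in> sets M" "0 < measure N A"
    then obtain B where "B \<in> sets M" "B \<subseteq> A" "0 < emeasure N B" "emeasure N B < emeasure N A"
      using na sets unfolding nonatomic_def by (auto simp: emeasure_eq_measure)
    then show "\<exists>B\<in>sets M. B \<subseteq> A \<and> 0 < measure N B \<and> measure N B < measure N A"
      by (auto simp: emeasure_eq_measure ennreal_less_iff)
  qed (use sets in \<open>auto intro: finite_measure_Union finite_Lim_measure_incseq\<close>)
qed

lemma dyadic_floor_tendsto: "(\<lambda>n. of_int \<lfloor>s * 2 ^ n\<rfloor> / 2 ^ n) \<longlonglongrightarrow> (s::real)"
proof (rule tendsto_sandwich)
  show "(\<lambda>n. s - (1/2) ^ n) \<longlonglongrightarrow> s"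
    by (auto intro!: tendsto_eq_intros LIMSEQ_power_zero)
  have "s - (1/2) ^ n \<le> of_int \<lfloor>s * 2 ^ n\<rfloor> / 2 ^ n" for n :: nat
  proof -
    have "(s * 2 ^ n - 1) / 2 ^ n \<le> of_int \<lfloor>s * 2 ^ n\<rfloor> / 2 ^ n"
      by (intro divide_right_mono) (linarith, simp)
    then show ?thesis by (simp add: diff_divide_distrib power_one_over)
  qed
  then show "\<forall>\<^sub>F n in sequentially. s - (1/2) ^ n \<le> of_int \<lfloor>s * 2 ^ n\<rfloor> / 2 ^ n"
    by simp
  show "\<forall>\<^sub>F n in sequentially. of_int \<lfloor>s * 2 ^ n\<rfloor> / 2 ^ n \<le> s"
    by (simp add: divide_le_eq)
qed auto

definition linear_chain ::
  "'a measure \<Rightarrow> 'i set \<Rightarrow> ('i \<Rightarrow> 'a set \<Rightarrow> real) \<Rightarrow> 'a set \<Rightarrow> (real \<Rightarrow> 'a set) \<Rightarrow> bool" where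
  "linear_chain M I m A D \<longleftrightarrow> (\<forall>s. D s \<in> sets M \<and> D s \<subseteq> A) \<and> mono D \<and>
     (\<forall>i\<in>I. \<forall>s\<in>{0..1}. m i (D s) = s * m i A)"

lemma
  assumes "linear_chain M I m A D"
  shows linear_chain_sets: "D s \<in> sets M"
    and linear_chain_subset: "D s \<subseteq> A"
    and linear_chain_mono: "s \<le> t \<Longrightarrow> D s \<subseteq> D t"
    and linear_chain_measure: "i \<in> I \<Longrightarrow> s \<in> {0..1} \<Longrightarrow> m i (D s) = s * m i A"
  using assms unfolding linear_chain_def by (auto dest: monoD)

lemma linear_chain_Diff:
  assumes D: "linear_chain M I m A D" and i: "i \<in> I" "nonatomic_set_function M (m i)"
    and st: "0 \<le> s" "s \<le> t" "t \<le> 1"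
  shows "m i (D t - D s) = (t - s) * m i A"
  using nonatomic_set_function.Diff[OF i(2) linear_chain_sets[OF D] linear_chain_sets[OF D]
      linear_chain_mono[OF D st(2)]] linear_chain_measure[OF D i(1)] st
  by (simp add: left_diff_distrib)

locale common_halving =
  fixes M :: "'a measure" and I :: "'i set" and m :: "'i \<Rightarrow> 'a set \<Rightarrow> real"
    and h :: "'a set \<Rightarrow> 'a set"
  assumes nonatomic_m: "i \<in> I \<Longrightarrow> nonatomic_set_function M (m i)"
    and halve_sets: "X \<in> sets M \<Longrightarrow> h X \<in> sets M"
    and halve_subset: "X \<in> sets M \<Longrightarrow> h X \<subseteq> X"
    and halve_measure: "X \<in> sets M \<Longrightarrow> i \<in> I \<Longrightarrow> m i (h X) = m i X / 2"
begin

text \<open>The odd entries of level \<open>n + 1\<close> add half of the gap between two neighbours of level \<open>n\<close>,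
  so that \<open>dyadic_level A n k\<close> carries the proportion \<open>k / 2 ^ n\<close> of every \<open>m i\<close>.\<close>
primrec dyadic_level :: "'a set \<Rightarrow> nat \<Rightarrow> nat \<Rightarrow> 'a set" where
  "dyadic_level A 0 = (\<lambda>k. if k = 0 then {} else A)"
| "dyadic_level A (Suc n) = (\<lambda>k. if even k then dyadic_level A n (k div 2)
      else dyadic_level A n (k div 2) \<union>
        h (dyadic_level A n (k div 2 + 1) - dyadic_level A n (k div 2)))"

context
  fixes A assumes A: "A \<in> sets M"
begin

lemma dyadic_level_sets: "dyadic_level A n k \<in> sets M"
  by (induction n arbitrary: k) (simp_all add: A halve_sets sets.Un sets.Diff)

lemma halve_gap_subset:
  "h (dyadic_level A n k' - dyadic_level A n k) \<subseteq> dyadic_level A n k' - dyadic_level A n k"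
  by (intro halve_subset sets.Diff dyadic_level_sets)

lemma dyadic_level_subset: "dyadic_level A n k \<subseteq> A"
proof (induction n arbitrary: k)
  case (Suc n)
  then show ?case
    using halve_gap_subset[of n "k div 2 + 1" "k div 2"] by auto
qed simp

lemma dyadic_level_subset_Suc: "dyadic_level A n k \<subseteq> dyadic_level A n (Suc k)"
proof (induction n arbitrary: k)
  case (Suc n)
  show ?case
  proof (cases "even k")
    case False
    then have "Suc k div 2 = k div 2 + 1"
      by presburger
    then show ?thesis
      using False Suc[of "k div 2"] halve_gap_subset[of n "k div 2 + 1" "k div 2"] by auto
  qed simp
qed simp

lemma dyadic_level_mono: "k \<le> k' \<Longrightarrow> dyadic_level A n k \<subseteq> dyadic_level A n k'"
  using lift_Suc_mono_le[of "dyadic_level A n"] dyadic_level_subset_Suc by blast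

lemma dyadic_level_measure:
  assumes "i \<in> I" and "k \<le> 2 ^ n"
  shows "m i (dyadic_level A n k) = real k / 2 ^ n * m i A"
  using assms(2)
proof (induction n arbitrary: k)
  case 0
  then have "k = 0 \<or> k = 1"
    by auto
  then show ?case
    using nonatomic_set_function.empty[OF nonatomic_m[OF assms(1)]] by auto
next
  case (Suc n)
  interpret nonatomic_set_function M "m i"
    using nonatomic_m[OF assms(1)] .
  show ?case
  proof (cases "even k")
    case True
    then show ?thesis
      using Suc by (auto elim!: evenE)
  next
    case False
    then obtain q where q: "k = 2 * q + 1"
      using oddE by blast
    let ?Gap = "dyadic_level A n (q + 1) - dyadic_level A n q"
    have gap: "?Gap \<in> sets M" "dyadic_level A n q \<inter> h ?Gap = {}"
      using halve_subset[of ?Gap] dyadic_level_sets by auto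
    have "m i (dyadic_level A (Suc n) k) = m i (dyadic_level A n q) + m i ?Gap / 2"
      using q additive[OF dyadic_level_sets halve_sets[OF gap(1)] gap(2)] halve_measure[OF gap(1) assms(1)]
      by simp
    also have "\<dots> = real q / 2 ^ n * m i A + (real (q + 1) / 2 ^ n * m i A - real q / 2 ^ n * m i A) / 2"
      using Diff[OF dyadic_level_sets dyadic_level_sets dyadic_level_mono[of q "q + 1"]] Suc q
      by simp
    also have "\<dots> = real k / 2 ^ Suc n * m i A"
      using q by (simp add: field_simps)
    finally show ?thesis .
  qed
qed

definition dyadic_chain :: "real \<Rightarrow> 'a set" where
  "dyadic_chain s = (\<Union>n. dyadic_level A n (nat \<lfloor>s * 2 ^ n\<rfloor>))"

lemma dyadic_chain_sets: "dyadic_chain s \<in> sets M"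
  unfolding dyadic_chain_def using dyadic_level_sets by auto

lemma dyadic_chain_subset: "dyadic_chain s \<subseteq> A"
  unfolding dyadic_chain_def using dyadic_level_subset by auto

lemma mono_dyadic_chain: "mono dyadic_chain"
proof
  fix s t :: real assume "s \<le> t"
  then have "nat \<lfloor>s * 2 ^ n\<rfloor> \<le> nat \<lfloor>t * 2 ^ n\<rfloor>" for n
    by (intro nat_mono floor_mono) simp
  then show "dyadic_chain s \<subseteq> dyadic_chain t"
    unfolding dyadic_chain_def using dyadic_level_mono by blast
qed

lemma dyadic_chain_measure:
  assumes i: "i \<in> I" and s: "0 \<le> s" "s \<le> 1"
  shows "m i (dyadic_chain s) = s * m i A"
proof -
  define X where "X n = dyadic_level A n (nat \<lfloor>s * 2 ^ n\<rfloor>)" for n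
  have "2 * nat \<lfloor>s * 2 ^ n\<rfloor> \<le> nat \<lfloor>s * 2 ^ Suc n\<rfloor>" for n
  proof -
    have "2 * \<lfloor>s * 2 ^ n\<rfloor> \<le> \<lfloor>s * 2 ^ Suc n\<rfloor>"
      using of_int_floor_le[of "s * 2 ^ n"] by (simp add: le_floor_iff)
    then show ?thesis
      using s by (simp add: nat_mult_distrib[symmetric])
  qed
  then have "incseq X"
    unfolding X_def using dyadic_level_mono[of "2 * _" _ "Suc _"] by (intro incseq_SucI) simp
  then have "(\<lambda>n. m i (X n)) \<longlonglongrightarrow> m i (dyadic_chain s)"
    unfolding dyadic_chain_def X_def
    by (intro nonatomic_set_function.continuous_from_below[OF nonatomic_m[OF i]] dyadic_level_sets)
  moreover have "m i (X n) = of_int \<lfloor>s * 2 ^ n\<rfloor> / 2 ^ n * m i A" for n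
  proof -
    have "s * 2 ^ n \<le> 2 ^ n"
      using s by (simp add: mult_left_le_one_le)
    then have "nat \<lfloor>s * 2 ^ n\<rfloor> \<le> 2 ^ n"
      using floor_mono[of "s * 2 ^ n" "2 ^ n"] by (simp add: nat_le_iff)
    then show ?thesis
      unfolding X_def using dyadic_level_measure[OF i] s by simp
  qed
  then have "(\<lambda>n. m i (X n)) \<longlonglongrightarrow> s * m i A"
    using tendsto_mult_right[OF dyadic_floor_tendsto] by presburger
  ultimately show ?thesis
    using LIMSEQ_unique by blast
qed

lemma linear_chain_dyadic_chain: "linear_chain M I m A dyadic_chain"
  unfolding linear_chain_def
  using dyadic_chain_sets dyadic_chain_subset mono_dyadic_chain dyadic_chain_measure by auto

end

end

lemma exists_linear_chain_if_common_halving: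
  assumes nonatomic: "\<And>i. i \<in> I \<Longrightarrow> nonatomic_set_function M (m i)"
    and halving: "\<And>X. X \<in> sets M \<Longrightarrow> \<exists>B\<in>sets M. B \<subseteq> X \<and> (\<forall>i\<in>I. m i B = m i X / 2)"
    and A: "A \<in> sets M"
  shows "\<exists>D. linear_chain M I m A D"
proof -
  obtain h where "\<And>X. X \<in> sets M \<Longrightarrow> h X \<in> sets M \<and> h X \<subseteq> X \<and> (\<forall>i\<in>I. m i (h X) = m i X / 2)"
    using halving by metis
  then have "common_halving M I m h"
    using nonatomic by (simp add: common_halving_def)
  then interpret common_halving M I m h .
  show ?thesis
    using linear_chain_dyadic_chain[OF A] by blast
qed

context nonatomic_set_function
begin

context
  fixes I m k A D
  assumes D: "linear_chain M I m A D" and k: "k \<in> I" "nonatomic_set_function M (m k)"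
    and dominated: "\<And>X. X \<in> sets M \<Longrightarrow> f X \<le> m k X"
    and A: "A \<in> sets M"
begin

lemma continuous_on_dominated_linear_chain: "continuous_on {0..1} (\<lambda>s. f (D s))"
proof (rule lipschitz_on_continuous_on)
  note D_sets = linear_chain_sets[OF D]
  have L: "dist (f (D s)) (f (D t)) \<le> m k A * dist s t"
    if "s \<in> {0..1}" "t \<in> {0..1}" "s \<le> t" for s t
  proof -
    have "f (D t - D s) = f (D t) - f (D s)"
      using Diff[OF D_sets D_sets linear_chain_mono[OF D \<open>s \<le> t\<close>]] .
    moreover have "0 \<le> f (D t - D s)"
      using nonneg D_sets by blast
    moreover have "f (D t - D s) \<le> (t - s) * m k A"
      using dominated[of "D t - D s"] linear_chain_Diff[OF D k, of s t] D_sets that by auto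
    ultimately show ?thesis
      using that by (simp add: dist_real_def mult.commute)
  qed
  show "lipschitz_on (m k A) {0..1} (\<lambda>s. f (D s))"
  proof (rule lipschitz_onI)
    fix s t :: real assume "s \<in> {0..1}" "t \<in> {0..1}"
    then show "dist (f (D s)) (f (D t)) \<le> m k A * dist s t"
      using L[of s t] L[of t s] by (cases "s \<le> t") (auto simp: dist_commute)
  qed (rule nonatomic_set_function.nonneg[OF k(2) A])
qed

lemma dominated_linear_chain_endpoints: "f (D 0) = 0" "f (D 1) = f A"
proof -
  note D01 = linear_chain_sets[OF D, of 0] linear_chain_sets[OF D, of 1] linear_chain_subset[OF D, of 1]
  have "m k (D 0) = 0" "m k (A - D 1) = 0"
    using linear_chain_measure[OF D k(1)] nonatomic_set_function.Diff[OF k(2) A D01(2,3)] by auto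
  then have "f (D 0) \<le> 0" "f (A - D 1) \<le> 0"
    using dominated[of "D 0"] dominated[of "A - D 1"] D01 A by auto
  then show "f (D 0) = 0" "f (D 1) = f A"
    using nonneg[of "D 0"] nonneg[of "A - D 1"] Diff[OF A D01(2,3)] D01 A by auto
qed

lemma exists_half_slice_of_dominated_linear_chain:
  "\<exists>s\<in>{0..1/2}. f (D (s + 1/2) - D s) = f A / 2"
proof -
  define \<phi> where "\<phi> s = f (D (s + 1/2)) - f (D s)" for s
  have "continuous_on {0..1/2} (\<lambda>s. f (D (s + 1/2)))"
    by (rule continuous_on_compose2[of _ _ _ "\<lambda>s. s + 1/2", OF continuous_on_dominated_linear_chain])
      (auto intro!: continuous_intros)
  moreover have "continuous_on {0..1/2} (\<lambda>s. f (D s))"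
    by (rule continuous_on_subset[OF continuous_on_dominated_linear_chain]) auto
  ultimately have "continuous_on {0..1/2} \<phi>"
    unfolding \<phi>_def by (rule continuous_on_diff)
  moreover have "\<phi> 0 + \<phi> (1/2) = f A"
    unfolding \<phi>_def using dominated_linear_chain_endpoints by simp
  ultimately have "\<exists>s. 0 \<le> s \<and> s \<le> 1/2 \<and> \<phi> s = f A / 2"
    using IVT'[of \<phi> 0 "f A / 2" "1/2"] IVT2'[of \<phi> "1/2" "f A / 2" 0]
    by (cases "\<phi> 0 \<le> f A / 2") auto
  then obtain s where s: "s \<in> {0..1/2}" "\<phi> s = f A / 2"
    by auto
  have "f (D (s + 1/2) - D s) = \<phi> s"
    unfolding \<phi>_def using Diff linear_chain_sets[OF D] linear_chain_mono[OF D, of s "s + 1/2"] by simp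
  then show ?thesis
    using s by auto
qed

end

end

lemma exists_common_half:
  assumes "finite I" and "\<And>i. i \<in> I \<Longrightarrow> nonatomic_set_function M (m i)" and "A \<in> sets M"
  shows "\<exists>B\<in>sets M. B \<subseteq> A \<and> (\<forall>i\<in>I. m i B = m i A / 2)"
  using assms
proof (induction I arbitrary: m A rule: finite_induct)
  case (insert j I)
  interpret j: nonatomic_set_function M "m j"
    using insert.prems by blast
  show ?case
  proof (cases "I = {}")
    case True
    then show ?thesis
      using j.exists_subset_eq[OF insert.prems(2), of "m j A / 2"] j.nonneg[OF insert.prems(2)]
      by auto
  next
    case False
    then obtain k where k: "k \<in> I"
      by blast
    \<comment> \<open>Halving \<open>m i + m j\<close> for \<open>i \<in> I\<close> and \<open>m j\<close> halves each \<open>m i\<close>.\<close>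
    define m' where "m' i X = m i X + m j X" for i X
    have m': "nonatomic_set_function M (m' i)" if "i \<in> I" for i
      unfolding m'_def using that insert.prems(1) by (intro nonatomic_set_function_add) auto
    obtain D where D: "linear_chain M I m' A D"
      using exists_linear_chain_if_common_halving[where m=m', OF m' insert.IH[OF m'] insert.prems(2)]
      by blast
    have "m j X \<le> m' k X" if "X \<in> sets M" for X
      using nonatomic_set_function.nonneg[OF insert.prems(1) that, of k] k unfolding m'_def by simp
    then obtain s where s: "s \<in> {0..1/2}" "m j (D (s + 1/2) - D s) = m j A / 2"
      using j.exists_half_slice_of_dominated_linear_chain[OF D k m'[OF k] _ insert.prems(2)] by blast
    have "m' i (D (s + 1/2) - D s) = m' i A / 2" if "i \<in> I" for i
      using linear_chain_Diff[OF D that m'[OF that], of s "s + 1/2"] s(1) by simp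
    moreover have "D (s + 1/2) - D s \<in> sets M" "D (s + 1/2) - D s \<subseteq> A"
      using linear_chain_sets[OF D] linear_chain_subset[OF D] by auto
    ultimately show ?thesis
      using s(2) unfolding m'_def by (intro bexI[of _ "D (s + 1/2) - D s"]) auto
  qed
qed blast

lemma exists_common_equipartition:
  assumes "finite I" and nonatomic: "\<And>i. i \<in> I \<Longrightarrow> nonatomic_set_function M (m i)"
    and A: "A \<in> sets M" and n: "0 < n"
  shows "\<exists>P. disjoint_family P \<and> (\<forall>k. P k \<in> sets M \<and> P k \<subseteq> A) \<and>
           (\<forall>i\<in>I. \<forall>k\<in>{1..n}. m i (P k) = m i A / real n)"
proof -
  obtain D where D: "linear_chain M I m A D"
    using exists_linear_chain_if_common_halving[where m=m, OF nonatomic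
        exists_common_half[OF assms(1) nonatomic] A]
    by blast
  define P where "P k = D (real k / n) - D ((real k - 1) / n)" for k :: nat
  have "P k \<inter> P k' = {}" if "k < k'" for k k'
  proof -
    have "real k / n \<le> (real k' - 1) / n"
      using that by (intro divide_right_mono) auto
    then show ?thesis
      unfolding P_def using linear_chain_mono[OF D] by blast
  qed
  then have "disjoint_family P"
    unfolding disjoint_family_on_def by (metis Int_commute linorder_neqE_nat)
  moreover have "m i (P k) = m i A / real n" if "i \<in> I" "k \<in> {1..n}" for i k
    using divide_right_mono[of "real k - 1" "real k" n] n that
      linear_chain_Diff[OF D that(1) nonatomic[OF that(1)], of "(real k - 1) / n" "real k / n"]
    by (simp add: P_def diff_divide_distrib[symmetric])
  moreover have "P k \<in> sets M" "P k \<subseteq> A" for k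
    unfolding P_def using linear_chain_sets[OF D] linear_chain_subset[OF D] by auto
  ultimately show ?thesis
    by blast
qed

theorem lemma10:
  fixes M :: "'a measure" and mu :: "nat \<Rightarrow> 'a measure" and r :: nat and S :: "'a set"
  assumes r: "r \<ge> 1"
    and sets_mu: "\<And>i. i \<in> {1..r} \<Longrightarrow> sets (mu i) = sets M"
    and fin: "\<And>i. i \<in> {1..r} \<Longrightarrow> finite_measure (mu i)"
    and na: "\<And>i. i \<in> {1..r} \<Longrightarrow> nonatomic (mu i)"
    and S: "S \<in> sets M"
    and prod_ne: "(\<Prod>i\<in>{1..r}. measure (mu i) S) \<noteq> 0"
  shows "\<exists>R l H F.
           (\<forall>k\<in>{1..r}. R k \<in> sets M \<and> R k \<subseteq> S) \<and>
           (\<forall>k\<in>{1..r}. \<forall>k'\<in>{1..r}. k \<noteq> k' \<longrightarrow> R k \<inter> R k' = {}) \<and>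
           bij_betw l {1..r} {1..r} \<and>
           (\<forall>k\<in>{1..r}. measure (mu (l k)) (R k) = measure (mu (l k)) S / real r) \<and>
           (\<forall>k\<in>{1..r}. \<forall>j\<in>{1..r}. j > k \<longrightarrow>
               measure (mu (l j)) (R k) \<le> measure (mu (l j)) S / real r) \<and>
           H \<in> sets M \<and> H \<subseteq> S \<and>
           measure (mu (l 1)) H \<ge> (1/2) ^ (r - 1) * measure (mu (l 1)) S \<and>
           gentleman_solution M mu r H F"
proof -
  obtain P where P: "disjoint_family P" "\<And>k. P k \<in> sets M" "\<And>k. P k \<subseteq> S"
    and P_measure: "\<And>i k. i \<in> {1..r} \<Longrightarrow> k \<in> {1..r} \<Longrightarrow>
      measure (mu i) (P k) = measure (mu i) S / real r"
    using exists_common_equipartition[of "{1..r}" M "\<lambda>i. measure (mu i)" S r]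
      nonatomic_set_function_measure[OF sets_mu fin na] S r by auto
  define H where "H = (\<Union>k\<in>{1..r}. P k)"
  have "measure (mu 1) H = (\<Sum>k\<in>{1..r}. measure (mu 1) (P k))"
    unfolding H_def using r P sets_mu[of 1]
    by (intro finite_measure.finite_measure_finite_Union fin) (auto simp: disjoint_family_on_def)
  also have "\<dots> = measure (mu 1) S"
    using r P_measure[of 1] by simp
  finally have "(1/2) ^ (r - 1) * measure (mu 1) S \<le> measure (mu 1) H"
    by (simp add: mult_left_le_one_le power_le_one)
  moreover have "gentleman_solution M mu r H P"
    unfolding gentleman_solution_def H_def using P P_measure by (auto simp: disjoint_family_on_def)
  moreover have "H \<in> sets M" "H \<subseteq> S"
    unfolding H_def using P by auto
  ultimately show ?thesis
    using P P_measure
    by (intro exI[of _ P] exI[of _ id] exI[of _ H]) (auto simp: disjoint_family_on_def)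
qed

end
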